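(* Let $M,N$ be positive integers and $C_0,\dots,C_{N-1}\in\{0,1,\dots,M-1\}$. For $p\in\{0,\dots,M-1\}$, $q\in\{0,\dots,N-1\}$ let $\bm\psi_{p,q}\in\mathbb{C}^N$ have entries $[\bm\psi_{p,q}]_n=\frac{1}{\sqrt N}e^{j\frac{2\pi p}{M}C_n+j\frac{2\pi q}{N}n}$, let $\bm\Psi_q=[\bm\psi_{0,q},\dots,\bm\psi_{M-1,q}]\in\mathbb{C}^{N\times M}$ and $\bm\Psi=[\bm\Psi_0,\dots,\bm\Psi_{N-1}]\in\mathbb{C}^{N\times MN}$. Then $\bm X:=\bm\Psi^H\bm\Psi\in\mathbb{C}^{MN\times MN}$, viewed as an $N\times N$ array of $M\times M$ blocks $\bm X_{q_1,q_2}=\bm\Psi_{q_1}^H\bm\Psi_{q_2}$, is a block circulant matrix with circulant blocks; that is, each block $\bm X_{q_1,q_2}$ is circulant, and $\bm X_{q_1,q_2}=\bm X_{0,(q_2-q_1)\bmod N}$ for all $q_1,q_2\in\{0,\dots,N-1\}$.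
   Context: $j$ denotes the imaginary unit and $(\cdot)^H$ the conjugate transpose. An $M\times M$ matrix $\bm A$ is circulant if $[\bm A]_{p_1,p_2}=[\bm A]_{0,(p_2-p_1)\bmod M}$. *)

theory Defs
  imports Complex_Main
begin

text \<open>Matrices of varying size are represented as functions nat => nat => complex,
  meaningful on the stated index ranges.\<close>

definition psi :: "nat \<Rightarrow> nat \<Rightarrow> (nat \<Rightarrow> nat) \<Rightarrow> nat \<Rightarrow> nat \<Rightarrow> nat \<Rightarrow> complex" where
  "psi M N C p q n =
     complex_of_real (1 / sqrt (real N)) *
     exp (\<i> * complex_of_real (2 * pi * real p / real M) * of_nat (C n)
        + \<i> * complex_of_real (2 * pi * real q / real N) * of_nat n)"

text \<open>Psi = [Psi_0, ..., Psi_{N-1}], an N x MN matrix; column q*M + p is psi_{p,q}.\<close>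
definition Psi :: "nat \<Rightarrow> nat \<Rightarrow> (nat \<Rightarrow> nat) \<Rightarrow> nat \<Rightarrow> nat \<Rightarrow> complex" where
  "Psi M N C n k = psi M N C (k mod M) (k div M) n"

definition Xmat :: "nat \<Rightarrow> nat \<Rightarrow> (nat \<Rightarrow> nat) \<Rightarrow> nat \<Rightarrow> nat \<Rightarrow> complex" where
  "Xmat M N C k1 k2 = (\<Sum>n<N. cnj (Psi M N C n k1) * Psi M N C n k2)"

definition Xblock :: "nat \<Rightarrow> nat \<Rightarrow> (nat \<Rightarrow> nat) \<Rightarrow> nat \<Rightarrow> nat \<Rightarrow> nat \<Rightarrow> nat \<Rightarrow> complex" where
  "Xblock M N C q1 q2 p1 p2 = Xmat M N C (q1 * M + p1) (q2 * M + p2)"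

definition circulant :: "nat \<Rightarrow> (nat \<Rightarrow> nat \<Rightarrow> complex) \<Rightarrow> bool" where
  "circulant M A \<longleftrightarrow>
     (\<forall>p1<M. \<forall>p2<M. A p1 p2 = A 0 (nat ((int p2 - int p1) mod int M)))"

end

theory Submission
  imports Defs
begin

text \<open>Each entry of X is a normalised sum of products of the roots of unity
  e^{j 2 pi (p2 - p1) C_n / M} and e^{j 2 pi (q2 - q1) n / N}, so it depends only on the
  index differences p2 - p1 modulo M and q2 - q1 modulo N.  Both block circulance and
  circulance of the blocks follow at once.\<close>

definition root_pow :: "nat \<Rightarrow> int \<Rightarrow> complex" where
  "root_pow M k = cis (2 * pi * of_int k / of_nat M)"

lemma root_pow_mod: "root_pow M (k mod int M) = root_pow M k"
proof (cases "M = 0")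
  case False
  have "real_of_int k = real_of_int (k mod int M) + real M * real_of_int (k div int M)"
    by (metis add.commute mult.commute of_int_add of_int_mult of_int_of_nat_eq div_mult_mod_eq)
  then have "2 * pi * of_int k / of_nat M = 2 * pi * of_int (k mod int M) / of_nat M + 2 * pi * of_int (k div int M)"
    using False by (simp add: field_simps)
  then have "root_pow M k = root_pow M (k mod int M) * cis (2 * pi * of_int (k div int M))"
    by (simp add: root_pow_def flip: cis_mult)
  then show ?thesis by simp
qed simp

lemma root_pow_mult_mod: "root_pow M (a mod int M * b) = root_pow M (a * b)"
  by (metis root_pow_mod mod_mult_left_eq)

lemma psi_eq_cis:
  "psi M N C p q n = cis (2 * pi * real p / real M * C n + 2 * pi * real q / real N * n) / sqrt N"
  unfolding psi_def cis_conv_exp by (simp add: algebra_simps)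

lemma cnj_psi_mult_psi:
  "cnj (psi M N C p1 q1 n) * psi M N C p2 q2 n
     = root_pow M ((int p2 - int p1) * int (C n)) * root_pow N ((int q2 - int q1) * int n) / of_nat N"
  proof -
  have "complex_of_real (sqrt N) * complex_of_real (sqrt N) = of_nat N"
    by (simp flip: of_real_mult)
  then show ?thesis
    by (simp add: psi_eq_cis cis_cnj cis_mult root_pow_def algebra_simps diff_divide_distrib add_divide_distrib)
qed

definition gram_kernel :: "nat \<Rightarrow> nat \<Rightarrow> (nat \<Rightarrow> nat) \<Rightarrow> int \<Rightarrow> int \<Rightarrow> complex" where
  "gram_kernel M N C d e = (\<Sum>n<N. root_pow M (d * int (C n)) * root_pow N (e * int n)) / of_nat N"

lemma Xblock_eq_gram_kernel:
  assumes "p1 < M" "p2 < M"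
  shows "Xblock M N C q1 q2 p1 p2 = gram_kernel M N C (int p2 - int p1) (int q2 - int q1)"
proof -
  have "Psi M N C n (q * M + p) = psi M N C p q n" if "p < M" for n q p
    using that by (simp add: Psi_def)
  then show ?thesis
    using assms by (simp add: Xblock_def Xmat_def gram_kernel_def cnj_psi_mult_psi sum_divide_distrib)
qed

lemma gram_kernel_mod_left: "gram_kernel M N C (d mod int M) e = gram_kernel M N C d e"
  by (simp add: gram_kernel_def root_pow_mult_mod)

lemma gram_kernel_mod_right: "gram_kernel M N C d (e mod int N) = gram_kernel M N C d e"
  by (simp add: gram_kernel_def root_pow_mult_mod)

theorem lemma3:
  fixes M N :: nat and C :: "nat \<Rightarrow> nat"
  assumes "M > 0" and "N > 0" and "\<forall>n<N. C n < M"
  shows "(\<forall>q1<N. \<forall>q2<N. circulant M (Xblock M N C q1 q2)) \<and>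
         (\<forall>q1<N. \<forall>q2<N. \<forall>p1<M. \<forall>p2<M.
            Xblock M N C q1 q2 p1 p2 =
            Xblock M N C 0 (nat ((int q2 - int q1) mod int N)) p1 p2)"
proof (intro conjI allI impI)
  fix q1 q2 assume "q1 < N" "q2 < N"
  show "circulant M (Xblock M N C q1 q2)"
    unfolding circulant_def
  proof (intro allI impI)
    fix p1 p2 assume p: "p1 < M" "p2 < M"
    let ?p = "nat ((int p2 - int p1) mod int M)"
    have "?p < M" and "int ?p = (int p2 - int p1) mod int M"
      using \<open>M > 0\<close> by (simp_all add: nat_less_iff)
    then show "Xblock M N C q1 q2 p1 p2 = Xblock M N C q1 q2 0 ?p"
      using \<open>M > 0\<close> p by (simp add: Xblock_eq_gram_kernel gram_kernel_mod_left)
  qed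
next
  fix q1 q2 p1 p2 assume "q1 < N" "q2 < N" and p: "p1 < M" "p2 < M"
  have "int (nat ((int q2 - int q1) mod int N)) = (int q2 - int q1) mod int N"
    using \<open>N > 0\<close> by simp
  then show "Xblock M N C q1 q2 p1 p2 = Xblock M N C 0 (nat ((int q2 - int q1) mod int N)) p1 p2"
    using p by (simp add: Xblock_eq_gram_kernel gram_kernel_mod_right)
qed

end
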